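(* Let $d\ge 2$ be an integer and let $a_1,\ldots,a_{d-1}$ be indeterminates over $\mathbb{C}$. Let $f=x^d+a_1x^{d-1}+\cdots+a_{d-2}x^2+a_{d-1}x\in\mathbb{C}[a_1,\ldots,a_{d-1}][x]$ (monic of degree $d$ in $x$, with zero constant term). For $k\in\{1,\ldots,d-1\}$ let $$H_k(f)=\binom{d}{k}x^{d-k}+\binom{d-1}{k}a_1x^{d-k-1}+\cdots+\binom{k}{k}a_{d-k}$$ be the $k$-th Hasse derivative of $f$ (with $a_d=0$), and let $R_k=\operatorname{Res}_x(f,H_k(f))\in\mathbb{C}[a_1,\ldots,a_{d-1}]$ be the resultant of $f$ and $H_k(f)$ with respect to $x$. Let $i\in\{d-3,d-2,d-1\}$ with $i\ge 1$. Then $$R_i\notin\sqrt{(R_1,\ldots,R_{i-1},R_{i+1},\ldots,R_{d-1})},$$ where the ideal is the ideal of $\mathbb{C}[a_1,\ldots,a_{d-1}]$ generated by $\{R_1,\ldots,R_{d-1}\}\setminus\{R_i\}$ and $\sqrt{\cdot}$ denotes its radical.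
   Context: The paper works over the field $K=\mathbb{C}$ (it notes that the corresponding radical-membership statements depend only on the characteristic, which is zero). The $k$-th Hasse derivative $H_k(f)$ equals $\frac{1}{k!}\frac{d^k f}{dx^k}$. *)

theory Defs
  imports "HOL-Library.Poly_Mapping" "HOL-Computational_Algebra.Polynomial" "Subresultants.Resultant_Prelim"
begin

text \<open>The multivariate polynomial ring over the complex numbers, with variables indexed
  by natural numbers (variable j stands for the indeterminate a_j).\<close>
type_synonym cmpoly = "(nat \<Rightarrow>\<^sub>0 nat) \<Rightarrow>\<^sub>0 complex"

definition var :: "nat \<Rightarrow> cmpoly" where
  "var j = Poly_Mapping.single (Poly_Mapping.single j 1) 1"

definition hasse :: "nat \<Rightarrow> 'a::comm_semiring_1 poly \<Rightarrow> 'a poly" where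
  "hasse k p = (\<Sum>j\<le>degree p. monom (of_nat ((j + k) choose k) * coeff p (j + k)) j)"

definition gen_f :: "nat \<Rightarrow> cmpoly poly" where
  "gen_f d = monom 1 d + (\<Sum>j\<in>{1..d-1}. monom (var j) (d - j))"

definition Res :: "nat \<Rightarrow> nat \<Rightarrow> cmpoly" where
  "Res d k = resultant (gen_f d) (hasse k (gen_f d))"

definition in_ideal_gen :: "'a::comm_ring_1 \<Rightarrow> 'a set \<Rightarrow> bool" where
  "in_ideal_gen x S \<longleftrightarrow> (\<exists>c. x = (\<Sum>s\<in>S. c s * s))"

definition in_radical_gen :: "'a::comm_ring_1 \<Rightarrow> 'a set \<Rightarrow> bool" where
  "in_radical_gen x S \<longleftrightarrow> (\<exists>n. in_ideal_gen (x ^ n) S)"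

end

theory Submission
  imports Defs Subresultants.Subresultant_Gcd
    "HOL-Computational_Algebra.Fundamental_Theorem_Algebra"
    "HOL-Computational_Algebra.Field_as_Ring"
begin

text \<open>Specialise a_(d-i) = 1 and all other a_j = 0, so that f becomes x^d + x^i.
  For k \<noteq> i this polynomial and its k-th Hasse derivative both vanish at 0, so every R_k
  with k \<noteq> i specialises to 0. On the other hand H_i(x^d + x^i) = binom(d,i) x^(d-i) + 1, and
  a common root z would satisfy z^(d-i) = -1 and hence binom(d,i) = 1, which is impossible for
  0 < i < d; so R_i specialises to a nonzero complex number. A ring homomorphism into a domain
  that kills the generators of an ideal but not R_i shows that R_i is not in its radical.
  The argument works for every i with 1 \<le> i \<le> d - 1.\<close>

definition eval_monomial :: "('v \<Rightarrow> 'a::comm_semiring_1) \<Rightarrow> ('v \<Rightarrow>\<^sub>0 nat) \<Rightarrow> 'a"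
  where
  "eval_monomial a m = (\<Prod>v\<in>Poly_Mapping.keys m. a v ^ Poly_Mapping.lookup m v)"

definition eval_mpoly :: "('v \<Rightarrow> 'a::comm_semiring_1) \<Rightarrow> (('v \<Rightarrow>\<^sub>0 nat) \<Rightarrow>\<^sub>0 'a) \<Rightarrow> 'a"
  where
  "eval_mpoly a p = (\<Sum>m\<in>Poly_Mapping.keys p. Poly_Mapping.lookup p m * eval_monomial a m)"

lemma eval_monomial_superset:
  assumes "finite A" "Poly_Mapping.keys m \<subseteq> A"
  shows "eval_monomial a m = (\<Prod>v\<in>A. a v ^ Poly_Mapping.lookup m v)"
  unfolding eval_monomial_def using assms
  by (intro prod.mono_neutral_left) (auto simp: in_keys_iff)

lemma eval_monomial_add: "eval_monomial a (m + m') = eval_monomial a m * eval_monomial a m'"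
proof -
  let ?A = "Poly_Mapping.keys m \<union> Poly_Mapping.keys m'"
  have "eval_monomial a (m + m')
      = (\<Prod>v\<in>?A. a v ^ Poly_Mapping.lookup m v * a v ^ Poly_Mapping.lookup m' v)"
    by (subst eval_monomial_superset[of ?A]) (auto simp: keys_add lookup_add power_add)
  also have "\<dots> = eval_monomial a m * eval_monomial a m'"
    by (simp add: prod.distrib eval_monomial_superset[of ?A])
  finally show ?thesis .
qed

lemma eval_monomial_zero [simp]: "eval_monomial a 0 = 1"
  by (simp add: eval_monomial_def)

lemma eval_monomial_single [simp]: "eval_monomial a (Poly_Mapping.single v n) = a v ^ n"
  by (subst eval_monomial_superset[of "{v}"]) auto

lemma eval_mpoly_superset:
  assumes "finite A" "Poly_Mapping.keys p \<subseteq> A"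
  shows "eval_mpoly a p = (\<Sum>m\<in>A. Poly_Mapping.lookup p m * eval_monomial a m)"
  unfolding eval_mpoly_def using assms
  by (intro sum.mono_neutral_left) (auto simp: in_keys_iff)

lemma eval_mpoly_zero [simp]: "eval_mpoly a 0 = 0"
  by (simp add: eval_mpoly_def)

lemma eval_mpoly_add: "eval_mpoly a (p + q) = eval_mpoly a p + eval_mpoly a q"
  by (simp add: eval_mpoly_superset[of "Poly_Mapping.keys p \<union> Poly_Mapping.keys q"]
      keys_add lookup_add distrib_right sum.distrib)

lemma eval_mpoly_sum: "eval_mpoly a (sum f A) = (\<Sum>x\<in>A. eval_mpoly a (f x))"
  by (induction A rule: infinite_finite_induct) (simp_all add: eval_mpoly_add)

lemma eval_mpoly_single [simp]:
  "eval_mpoly a (Poly_Mapping.single m c) = c * eval_monomial a m"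
  by (subst eval_mpoly_superset[of "{m}"]) auto

lemma poly_mapping_sum_single:
  "p = (\<Sum>m\<in>Poly_Mapping.keys p. Poly_Mapping.single m (Poly_Mapping.lookup p m))"
  by (rule poly_mapping_eqI)
    (auto simp: lookup_sum lookup_single when_def in_keys_iff intro: sum.neutral)

lemma eval_mpoly_mult: "eval_mpoly a (p * q) = eval_mpoly a p * eval_mpoly a q"
proof -
  let ?s = "\<lambda>p m. Poly_Mapping.single m (Poly_Mapping.lookup p m)"
  have "p * q
      = (\<Sum>m\<in>Poly_Mapping.keys p. ?s p m) * (\<Sum>m'\<in>Poly_Mapping.keys q. ?s q m')"
    by (subst (1 2) poly_mapping_sum_single) simp
  also have "\<dots> = (\<Sum>m\<in>Poly_Mapping.keys p. \<Sum>m'\<in>Poly_Mapping.keys q.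
      Poly_Mapping.single (m + m') (Poly_Mapping.lookup p m * Poly_Mapping.lookup q m'))"
    by (simp add: sum_distrib_left sum_distrib_right mult_single) (rule sum.swap)
  finally have "eval_mpoly a (p * q)
    = (\<Sum>m\<in>Poly_Mapping.keys p. \<Sum>m'\<in>Poly_Mapping.keys q.
      Poly_Mapping.lookup p m * Poly_Mapping.lookup q m' * eval_monomial a (m + m'))"
    by (simp add: eval_mpoly_sum)
  also have "\<dots> = eval_mpoly a p * eval_mpoly a q"
    by (simp add: eval_monomial_add eval_mpoly_def sum_product mult_ac)
  finally show ?thesis .
qed

lemma eval_mpoly_one: "eval_mpoly a 1 = 1"
  by (metis eval_mpoly_single eval_monomial_zero mult_1 single_one)

lemma comm_ring_hom_eval_mpoly:
  "comm_ring_hom (eval_mpoly (a :: 'v \<Rightarrow> 'a::comm_ring_1))"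
  by unfold_locales (simp_all add: eval_mpoly_one eval_mpoly_add eval_mpoly_mult)

lemma coeff_hasse: "coeff (hasse k p) j = of_nat ((j + k) choose k) * coeff p (j + k)"
proof (cases "j \<le> degree p")
  case False
  then have "coeff p (j + k) = 0"
    by (intro coeff_eq_0) simp
  with False show ?thesis
    by (simp add: hasse_def coeff_sum coeff_monom sum.delta)
qed (simp add: hasse_def coeff_sum coeff_monom sum.delta)

lemma map_poly_hasse:
  assumes "comm_semiring_hom h"
  shows "map_poly h (hasse k p) = hasse k (map_poly h p)"
proof -
  interpret comm_semiring_hom h by fact
  show ?thesis
    by (rule poly_eqI) (simp add: coeff_hasse hom_distribs)
qed

lemma degree_hasse:
  fixes p :: "'a::{comm_semiring_1,semiring_char_0} poly"
  assumes "lead_coeff p = 1" "k \<le> degree p"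
  shows "degree (hasse k p) = degree p - k"
proof (rule antisym)
  show "degree (hasse k p) \<le> degree p - k"
    by (rule degree_le) (auto simp: coeff_hasse coeff_eq_0)
  have "coeff (hasse k p) (degree p - k) = of_nat (degree p choose k)"
    using assms by (simp add: coeff_hasse)
  also have "\<dots> \<noteq> 0"
    using assms(2) by simp
  finally show "degree p - k \<le> degree (hasse k p)"
    by (rule le_degree)
qed

lemma resultant_hasse_map_poly:
  fixes p :: "'a::{comm_ring_1,ring_char_0} poly"
    and h :: "'a \<Rightarrow> 'b::{comm_ring_1,ring_char_0}"
  assumes "comm_ring_hom h" "lead_coeff p = 1" "k \<le> degree p"
  shows "h (resultant p (hasse k p)) = resultant (map_poly h p) (hasse k (map_poly h p))"
proof -
  interpret comm_ring_hom h by fact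
  note hasse_hom = map_poly_hasse[OF comm_semiring_hom_axioms]
  have deg: "degree (map_poly h p) = degree p"
    using assms(2) by (intro Ring_Hom_Poly.degree_map_poly) auto
  moreover have "lead_coeff (map_poly h p) = 1"
    using assms(2) deg by (simp add: coeff_map_poly)
  ultimately have "degree (map_poly h (hasse k p)) = degree (hasse k p)"
    using assms by (simp add: hasse_hom degree_hasse)
  from resultant_map_poly[OF deg this] show ?thesis
    by (simp add: hasse_hom)
qed

lemma coeff_gen_f_self: "coeff (gen_f d) d = 1"
  by (auto simp: gen_f_def coeff_sum coeff_monom intro!: sum.neutral)

lemma degree_gen_f: "degree (gen_f d) = d"
proof (rule antisym)
  show "degree (gen_f d) \<le> d"
    unfolding gen_f_def
    by (intro degree_add_le degree_sum_le) (auto intro: order.trans[OF degree_monom_le])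
  show "d \<le> degree (gen_f d)"
    using coeff_gen_f_self[of d] by (intro le_degree) simp
qed

lemma eval_mpoly_var: "eval_mpoly a (var j) = a j"
  by (simp add: var_def)

lemma map_poly_eval_gen_f:
  "map_poly (eval_mpoly a) (gen_f d) = monom 1 d + (\<Sum>j\<in>{1..d-1}. monom (a j) (d - j))"
proof -
  interpret map_poly_comm_ring_hom "eval_mpoly a"
    by (rule map_poly_comm_ring_hom.intro) (rule comm_ring_hom_eval_mpoly)
  show ?thesis
    by (simp add: gen_f_def hom_distribs hom_sum eval_mpoly_var)
qed

lemma eval_mpoly_Res:
  assumes "k \<le> d"
  shows "eval_mpoly a (Res d k)
    = resultant (map_poly (eval_mpoly a) (gen_f d)) (hasse k (map_poly (eval_mpoly a) (gen_f d)))"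
  unfolding Res_def using assms
  by (intro resultant_hasse_map_poly comm_ring_hom_eval_mpoly)
    (simp_all add: degree_gen_f coeff_gen_f_self)

lemma map_poly_eval_gen_f_indicator:
  assumes "0 < i" "i < d"
  shows "map_poly (eval_mpoly (\<lambda>j. of_bool (j = d - i))) (gen_f d) = monom 1 d + monom 1 i"
proof -
  have "(\<Sum>j\<in>{1..d-1}. monom (of_bool (j = d - i)) (d - j))
      = (\<Sum>j\<in>{1..d-1}. if j = d - i then monom 1 (d - j) else (0 :: complex poly))"
    by (intro sum.cong) auto
  also have "\<dots> = monom 1 i"
    using assms by auto
  finally show ?thesis
    by (simp add: map_poly_eval_gen_f)
qed

lemma resultant_eq_0_iff_common_root:
  fixes p q :: "complex poly"
  assumes "p \<noteq> 0"
  shows "resultant p q = 0 \<longleftrightarrow> (\<exists>z. poly p z = 0 \<and> poly q z = 0)"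
proof
  assume "resultant p q = 0"
  then have "\<not> constant (poly (gcd p q))"
    by (simp add: resultant_0_gcd constant_degree)
  then obtain z where "poly (gcd p q) z = 0"
    using fundamental_theorem_of_algebra by blast
  then show "\<exists>z. poly p z = 0 \<and> poly q z = 0"
    by (metis gcd_dvd1 gcd_dvd2 poly_eq_0_iff_dvd dvd_trans)
next
  assume "\<exists>z. poly p z = 0 \<and> poly q z = 0"
  then obtain z where "[:-z, 1:] dvd gcd p q"
    by (auto simp: poly_eq_0_iff_dvd)
  moreover have "gcd p q \<noteq> 0"
    using assms by simp
  ultimately have "degree [:-z, 1:] \<le> degree (gcd p q)"
    by (rule dvd_imp_degree_le)
  then show "resultant p q = 0"
    by (simp add: resultant_0_gcd)
qed

lemma binomial_neq_1:
  assumes "0 < k" "k < n"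
  shows "n choose k \<noteq> 1"
proof -
  obtain n' k' where n: "n = Suc n'" and k: "k = Suc k'"
    using assms by (metis gr0_implies_Suc less_imp_Suc_add)
  have "n' choose k' > 0" "n' choose Suc k' > 0"
    using assms n k by auto
  then show ?thesis
    unfolding n k binomial_Suc_Suc by linarith
qed

lemma hasse_monom_add_monom:
  assumes "i < d"
  shows "hasse i (monom 1 d + monom 1 i) = monom (of_nat (d choose i)) (d - i) + 1"
  using assms by (intro poly_eqI) (auto simp: coeff_hasse coeff_monom coeff_1)

lemma monom_add_monom_neq_0:
  assumes "i \<noteq> d"
  shows "monom 1 d + monom (1::'a::{comm_semiring_1,zero_neq_one}) i \<noteq> 0"
proof -
  have "coeff (monom 1 d + monom (1::'a) i) d = 1"
    using assms by (simp add: coeff_monom)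
  then show ?thesis
    by (metis coeff_0 zero_neq_one)
qed

lemma resultant_hasse_monom_add_monom_eq_0:
  assumes "0 < i" "i < d" "k < d" "k \<noteq> i"
  shows "resultant (monom 1 d + monom 1 i) (hasse k (monom 1 d + monom (1::complex) i)) = 0"
proof -
  have "monom 1 d + monom (1::complex) i \<noteq> 0"
    using assms by (intro monom_add_monom_neq_0) simp
  moreover have "poly (monom 1 d + monom (1::complex) i) 0 = 0"
    using assms by (simp add: poly_monom power_0_left)
  moreover have "poly (hasse k (monom 1 d + monom (1::complex) i)) 0 = 0"
    using assms by (simp add: poly_0_coeff_0 coeff_hasse coeff_monom)
  ultimately show ?thesis
    by (auto simp: resultant_eq_0_iff_common_root)
qed

lemma resultant_hasse_monom_add_monom_neq_0:
  assumes "0 < i" "i < d"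
  shows "resultant (monom 1 d + monom 1 i) (hasse i (monom 1 d + monom (1::complex) i)) \<noteq> 0"
proof
  assume "resultant (monom 1 d + monom 1 i) (hasse i (monom 1 d + monom (1::complex) i)) = 0"
  then obtain z :: complex where root_f: "z ^ d + z ^ i = 0"
    and root_hasse: "of_nat (d choose i) * z ^ (d - i) + 1 = 0"
    using assms monom_add_monom_neq_0[of i d]
    by (subst (asm) resultant_eq_0_iff_common_root)
      (auto simp: hasse_monom_add_monom poly_monom)
  then have "z \<noteq> 0"
    using assms by (auto simp: power_0_left)
  moreover have "z ^ i * (z ^ (d - i) + 1) = 0"
    using root_f assms by (simp add: distrib_left flip: power_add)
  ultimately have "z ^ (d - i) = -1"
    by (simp add: add_eq_0_iff2)
  with root_hasse have "d choose i = 1"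
    by (simp add: add_eq_0_iff2)
  with assms binomial_neq_1 show False
    by blast
qed

lemma not_in_radical_gen_if_hom_separates:
  fixes h :: "'a::comm_ring_1 \<Rightarrow> 'b::idom"
  assumes "comm_ring_hom h" "\<And>s. s \<in> S \<Longrightarrow> h s = 0" "h x \<noteq> 0"
  shows "\<not> in_radical_gen x S"
proof
  interpret comm_ring_hom h by fact
  assume "in_radical_gen x S"
  then obtain n c where "x ^ n = (\<Sum>s\<in>S. c s * s)"
    by (auto simp: in_radical_gen_def in_ideal_gen_def)
  then have "h (x ^ n) = 0"
    using assms(2) by (simp add: hom_sum hom_mult)
  with assms(3) show False
    by (simp add: hom_power)
qed

theorem theorem1p8:
  fixes d i :: nat
  assumes "d \<ge> 2" and "i \<in> {d - 3, d - 2, d - 1}" and "i \<ge> 1"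
  shows "\<not> in_radical_gen (Res d i) (Res d ` ({1..d - 1} - {i}))"
proof -
  have i: "0 < i" "i < d"
    using assms by auto
  define a :: "nat \<Rightarrow> complex" where "a = (\<lambda>j. of_bool (j = d - i))"
  have f_at_a: "map_poly (eval_mpoly a) (gen_f d) = monom 1 d + monom 1 i"
    unfolding a_def using i by (rule map_poly_eval_gen_f_indicator)
  show ?thesis
  proof (rule not_in_radical_gen_if_hom_separates[OF comm_ring_hom_eval_mpoly])
    fix s
    assume "s \<in> Res d ` ({1..d - 1} - {i})"
    then obtain k where k: "k \<in> {1..d - 1}" "k \<noteq> i" "s = Res d k"
      by blast
    then have "0 < k" "k < d"
      using i by auto
    with k i show "eval_mpoly a s = 0"
      by (simp add: eval_mpoly_Res f_at_a resultant_hasse_monom_add_monom_eq_0)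
  next
    show "eval_mpoly a (Res d i) \<noteq> 0"
      using i by (simp add: eval_mpoly_Res f_at_a resultant_hasse_monom_add_monom_neq_0)
  qed
qed

end
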